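(* Assume the setting below with $k\ge2$, suppose $\mathcal{S}$ is pseudo-symmetric, and let $(x_0,y_0)\in L$ be the point with $\varphi(x_0,y_0)=g(\mathcal{S})+a$. If $(x_0,y_0)\ne(2,0)$, then either $x_0=0$ or $x_0\equiv1\pmod k$. In particular, $\varphi(x_0,y_0)=\varphi(x_0-x,y_0-y)+\varphi(x,y)$ for all integers $0\le x\le x_0$, $0\le y\le y_0$.
   Context: Setting (AA-semigroups). Let $a,d,k,c$ be positive integers with $\gcd(a,a+d,\ldots,a+kd,c)=1$ and $\gcd(a,d)=1$, and let $\mathcal{S}=\langle a,a+d,\ldots,a+kd,c\rangle$ be the numerical semigroup of non-negative integer combinations of these generators; $g(\mathcal{S})$ is its Frobenius number (largest integer not in $\mathcal{S}$). $\mathcal{S}$ is pseudo-symmetric if $g(\mathcal{S})$ is even and $\mathcal{S}\cup(g(\mathcal{S})-\mathcal{S})=\mathbb{Z}\setminus\{g(\mathcal{S})/2\}$. Put $s_{-1}=a$ and let $s_0$ be the unique integer with $ds_0\equiv c\pmod a$, $0\le s_0<a$. If $s_0=0$ set $m=-1$. Otherwise define $q_{i+1},s_{i+1}$ for $i=0,1,2,\ldots$ by $s_{i-1}=q_{i+1}s_i-s_{i+1}$ with $0\le s_{i+1}<s_i$, and let $m$ be the index with $s_m>0=s_{m+1}$ (so $s_m=\gcd(a,c)$). Define $P_{-1}=0$, $P_0=1$, $P_{i+1}=q_{i+1}P_i-P_{i-1}$ for $i=0,\ldots,m$, and $R_i=\frac1a\big((a+kd)s_i-kcP_i\big)$ for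 $-1\le i\le m+1$; these are integers with $-c/s_m=R_{m+1}<R_m<\cdots<R_0<R_{-1}=a+kd$. Let $v$ be the unique integer with $R_{v+1}\le0<R_v$. Let $L=A\cup B$, where $A=\{(x,y)\in\mathbb{Z}^2:0\le x\le s_v-1,\ 0\le y\le P_{v+1}-P_v-1\}$ and $B=\{(x,y)\in\mathbb{Z}^2:0\le x\le s_v-s_{v+1}-1,\ P_{v+1}-P_v\le y\le P_{v+1}-1\}$. Define $\varphi:\mathbb{Z}^2\to\mathbb{Z}$, $\varphi(x,y)=\lceil x/k\rceil a+xd+yc$. It is known (Rødseth) that $|L|=a$ and $\varphi$ maps $L$ bijectively onto $\mathrm{Ap}(\mathcal{S};a)=\{s\in\mathcal{S}:s-a\notin\mathcal{S}\}$; consequently $g(\mathcal{S})+a=\max\varphi(L)$ is attained at $(s_v-s_{v+1}-1,P_{v+1}-1)$ or at $(s_v-1,P_{v+1}-P_v-1)$. *)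

theory Defs
  imports "HOL-Number_Theory.Number_Theory"
begin

definition AA_semigroup :: "int \<Rightarrow> int \<Rightarrow> nat \<Rightarrow> int \<Rightarrow> int set" where
  "AA_semigroup a d k c =
     {n. \<exists>u::nat \<Rightarrow> nat. \<exists>w::nat.
           n = (\<Sum>i\<le>k. int (u i) * (a + int i * d)) + int w * c}"

definition frobenius :: "int set \<Rightarrow> int" where
  "frobenius S = (GREATEST n. n \<notin> S)"

definition pseudo_symmetric :: "int set \<Rightarrow> bool" where
  "pseudo_symmetric S \<longleftrightarrow>
     even (frobenius S) \<and>
     S \<union> {frobenius S - s | s. s \<in> S} = UNIV - {frobenius S div 2}"

definition phi :: "int \<Rightarrow> int \<Rightarrow> nat \<Rightarrow> int \<Rightarrow> int \<Rightarrow> int \<Rightarrow> int" where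
  "phi a d k c x y = \<lceil>real_of_int x / real k\<rceil> * a + x * d + y * c"

definition Lset :: "int \<Rightarrow> int \<Rightarrow> int \<Rightarrow> int \<Rightarrow> (int \<times> int) set" where
  "Lset sv sv1 Pv Pv1 =
     {(x, y). 0 \<le> x \<and> x \<le> sv - 1 \<and> 0 \<le> y \<and> y \<le> Pv1 - Pv - 1} \<union>
     {(x, y). 0 \<le> x \<and> x \<le> sv - sv1 - 1 \<and> Pv1 - Pv \<le> y \<and> y \<le> Pv1 - 1}"

end

theory Submission
  imports Defs
begin

text \<open>
  The Apery elements \<open>\<phi>(x, y)\<close>, \<open>(x, y) \<in> L\<close>, are minimal in their residue classes mod \<open>a\<close>:
  if \<open>t \<in> S\<close> uses \<open>X\<close> copies of \<open>d\<close> and \<open>w\<close> copies of \<open>c\<close>, then \<open>(X - x, w - y)\<close> lies in the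
  lattice with basis \<open>(s\<^sub>v, -P\<^sub>v)\<close>, \<open>(s\<^sub>v\<^sub>+\<^sub>1, -P\<^sub>v\<^sub>+\<^sub>1)\<close>, for which \<open>L\<close> is a fundamental domain; the
  displacement therefore has coordinates \<open>\<alpha> \<ge> 0 \<ge> \<beta>\<close>, and \<open>R\<^sub>v > 0 \<ge> R\<^sub>v\<^sub>+\<^sub>1\<close> gives
  \<open>t - \<phi>(x, y) > -a\<close>, hence \<open>\<ge> 0\<close>.

  If \<open>x\<^sub>0 \<ge> 2\<close> is not \<open>1\<close> modulo \<open>k\<close>, then \<open>\<lceil>(x\<^sub>0 - 1)/k\<rceil> = \<lceil>x\<^sub>0/k\<rceil>\<close>, so \<open>\<phi>(x\<^sub>0 - 1, y\<^sub>0) = g + a - d\<close>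
  and by minimality \<open>g - d\<close> is a gap; so is \<open>d\<close>, as \<open>\<phi>(1, 0) = a + d\<close>. In a pseudo-symmetric
  semigroup only \<open>g/2\<close> is a gap whose mirror image is a gap, so \<open>g = 2d\<close>, and
  \<open>\<phi>(x\<^sub>0, y\<^sub>0) = a + 2d\<close> forces \<open>(x\<^sub>0, y\<^sub>0) = (2, 0)\<close>. For \<open>x\<^sub>0 \<equiv> 1 (mod k)\<close> the ceiling
  \<open>\<lceil>x/k\<rceil>\<close> is additive along \<open>x\<^sub>0 = (x\<^sub>0 - x) + x\<close>, which splits \<open>\<phi>\<close>.
\<close>

lemma ceiling_divide_eq_iff:
  fixes k :: nat and x C :: int
  assumes "k > 0"
  shows "\<lceil>real_of_int x / real k\<rceil> = C \<longleftrightarrow> int k * (C - 1) < x \<and> x \<le> int k * C"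
proof -
  have "real_of_int C - 1 < real_of_int x / real k \<longleftrightarrow> real_of_int (int k * (C - 1)) < real_of_int x"
    using assms by (simp add: field_simps)
  moreover have "real_of_int x / real k \<le> real_of_int C \<longleftrightarrow> real_of_int x \<le> real_of_int (int k * C)"
    using assms by (simp add: field_simps)
  ultimately show ?thesis
    unfolding ceiling_eq_iff of_int_less_iff of_int_le_iff by blast
qed

lemma ceiling_divide_bounds:
  fixes k :: nat and x :: int
  assumes "k > 0"
  shows "int k * (\<lceil>real_of_int x / real k\<rceil> - 1) < x" "x \<le> int k * \<lceil>real_of_int x / real k\<rceil>"
  using ceiling_divide_eq_iff[OF assms] by blast+

lemma ceiling_divide_diff_one:
  fixes k :: nat and x :: int
  assumes "k > 0" and "\<not> int k dvd x - 1"
  shows "\<lceil>real_of_int (x - 1) / real k\<rceil> = \<lceil>real_of_int x / real k\<rceil>"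
proof -
  define C where "C = \<lceil>real_of_int x / real k\<rceil>"
  have "int k * (C - 1) \<noteq> x - 1"
    using assms(2) by (metis dvd_triv_left)
  then show ?thesis
    using ceiling_divide_bounds[OF assms(1), of x]
    unfolding C_def[symmetric] ceiling_divide_eq_iff[OF assms(1)] by auto
qed

lemma ceiling_divide_split:
  fixes k :: nat and x x0 :: int
  assumes "k > 0" and "[x0 = 1] (mod int k)" and "0 \<le> x" "x \<le> x0"
  shows "\<lceil>real_of_int x0 / real k\<rceil> =
         \<lceil>real_of_int (x0 - x) / real k\<rceil> + \<lceil>real_of_int x / real k\<rceil>"
proof -
  obtain M where M: "x0 = int k * M + 1"
    using assms(2) unfolding cong_iff_dvd_diff by (metis dvdE diff_add_cancel)
  define C1 C2 where "C1 = \<lceil>real_of_int (x0 - x) / real k\<rceil>" and "C2 = \<lceil>real_of_int x / real k\<rceil>"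
  have b1: "int k * (C1 - 1) < x0 - x" "x0 - x \<le> int k * C1"
    using ceiling_divide_bounds[OF assms(1)] unfolding C1_def by blast+
  have b2: "int k * (C2 - 1) < x" "x \<le> int k * C2"
    using ceiling_divide_bounds[OF assms(1)] unfolding C2_def by blast+
  have "int k * (C1 + C2 - 2) < int k * M"
    using b1(1) b2(1) M by (simp add: algebra_simps)
  moreover have "int k * M < int k * (C1 + C2)"
    using b1(2) b2(2) M by (simp add: algebra_simps)
  ultimately have "C1 + C2 = M + 1"
    using assms(1) by (simp add: mult_less_cancel_left_pos)
  moreover have "\<lceil>real_of_int x0 / real k\<rceil> = M + 1"
    unfolding ceiling_divide_eq_iff[OF assms(1)] using M assms(1) by (simp add: algebra_simps)
  ultimately show ?thesis
    unfolding C1_def C2_def by simp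
qed

lemma AA_semigroup_memE:
  fixes a d c t :: int and k :: nat
  assumes "t \<in> AA_semigroup a d k c"
  obtains U X w where "0 \<le> X" "X \<le> int k * U" "0 \<le> w" "t = U * a + X * d + w * c"
proof -
  obtain u :: "nat \<Rightarrow> nat" and w :: nat
    where t: "t = (\<Sum>i\<le>k. int (u i) * (a + int i * d)) + int w * c"
    using assms unfolding AA_semigroup_def by blast
  define U where "U = (\<Sum>i\<le>k. int (u i))"
  define X where "X = (\<Sum>i\<le>k. int (u i) * int i)"
  have "(\<Sum>i\<le>k. int (u i) * (a + int i * d)) = U * a + X * d"
    unfolding U_def X_def by (simp add: algebra_simps sum.distrib sum_distrib_left)
  moreover have "X \<le> int k * U"
  proof -
    have "X \<le> (\<Sum>i\<le>k. int (u i) * int k)"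
      unfolding X_def by (intro sum_mono) (simp add: mult_left_mono)
    also have "\<dots> = int k * U"
      unfolding U_def by (simp add: sum_distrib_left mult.commute)
    finally show ?thesis .
  qed
  moreover have "0 \<le> X"
    unfolding X_def by (intro sum_nonneg) simp
  ultimately show thesis
    using that[of X U "int w"] t by simp
qed

lemma Lset_downward_closed:
  assumes "0 \<le> sv'" and "(x, y) \<in> Lset sv sv' Pv Pv'"
    and "0 \<le> x'" "x' \<le> x" "0 \<le> y'" "y' \<le> y"
  shows "(x', y') \<in> Lset sv sv' Pv Pv'"
  using assms unfolding Lset_def by auto

lemma pseudo_symmetric_gap_pair:
  assumes "pseudo_symmetric S" and "u \<notin> S" and "frobenius S - u \<notin> S"
  shows "frobenius S = 2 * u"
proof -
  have "frobenius S - u \<notin> S \<union> {frobenius S - s | s. s \<in> S}"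
    using assms(2,3) by auto
  then have "frobenius S - u = frobenius S div 2"
    using assms(1) unfolding pseudo_symmetric_def by blast
  moreover have "even (frobenius S)"
    using assms(1) unfolding pseudo_symmetric_def by blast
  ultimately show ?thesis
    by (metis add_diff_cancel_left' diff_diff_eq2 dvd_mult_div_cancel mult_2)
qed

lemma continuant_cong_det:
  fixes s q P :: "int \<Rightarrow> int" and a m :: int
  assumes s_m1: "s (-1) = a"
    and s_rec: "\<And>i. 0 \<le> i \<Longrightarrow> i \<le> m \<Longrightarrow> s (i - 1) = q (i + 1) * s i - s (i + 1)"
    and P_m1: "P (-1) = 0" and P_0: "P 0 = 1"
    and P_rec: "\<And>i. 0 \<le> i \<Longrightarrow> i \<le> m \<Longrightarrow> P (i + 1) = q (i + 1) * P i - P (i - 1)"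
  shows "-1 \<le> i \<Longrightarrow> i \<le> m \<Longrightarrow>
    [s i = P i * s 0] (mod a) \<and> [s (i + 1) = P (i + 1) * s 0] (mod a) \<and>
    s i * P (i + 1) - s (i + 1) * P i = a"
proof (induction i rule: int_ge_induct)
  case base
  show ?case
    using s_m1 P_m1 P_0 by (simp add: cong_iff_dvd_diff)
next
  case (step i)
  then have IH: "[s i = P i * s 0] (mod a)" "[s (i + 1) = P (i + 1) * s 0] (mod a)"
      "s i * P (i + 1) - s (i + 1) * P i = a"
    by simp_all
  have s2: "s (i + 2) = q (i + 2) * s (i + 1) - s i" and P2: "P (i + 2) = q (i + 2) * P (i + 1) - P i"
    using s_rec[of "i + 1"] P_rec[of "i + 1"] step.hyps step.prems by (simp_all add: add.assoc)
  have "[q (i + 2) * s (i + 1) - s i = q (i + 2) * (P (i + 1) * s 0) - P i * s 0] (mod a)"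
    using IH(1,2) by (intro cong_diff cong_mult cong_refl)
  then have "[s (i + 2) = P (i + 2) * s 0] (mod a)"
    unfolding s2 P2 by (simp add: algebra_simps)
  moreover have "s (i + 1) * P (i + 2) - s (i + 2) * P (i + 1) = a"
    unfolding s2 P2 using IH(3) by (simp add: algebra_simps)
  ultimately show ?case
    using IH(2) by (simp add: add.assoc)
qed

lemma continuant_increasing:
  fixes s q P :: "int \<Rightarrow> int" and a m :: int
  assumes s_m1: "s (-1) = a" and s_0: "s 0 < a"
    and s_rec: "\<And>i. 0 \<le> i \<Longrightarrow> i \<le> m \<Longrightarrow>
                  s (i - 1) = q (i + 1) * s i - s (i + 1) \<and> 0 \<le> s (i + 1) \<and> s (i + 1) < s i"
    and P_m1: "P (-1) = 0" and P_0: "P 0 = 1"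
    and P_rec: "\<And>i. 0 \<le> i \<Longrightarrow> i \<le> m \<Longrightarrow> P (i + 1) = q (i + 1) * P i - P (i - 1)"
  shows "-1 \<le> i \<Longrightarrow> i \<le> m \<Longrightarrow> 0 \<le> P i \<and> P i < P (i + 1)"
proof (induction i rule: int_ge_induct)
  case base
  show ?case
    using P_m1 P_0 by simp
next
  case (step i)
  then have IH: "0 \<le> P i" "P i < P (i + 1)"
    by simp_all
  have i: "0 \<le> i + 1" "i + 1 \<le> m"
    using step by simp_all
  have "s i > s (i + 1)"
    using s_0 s_m1 s_rec[of i] i by (cases "i = -1") auto
  moreover have "s i = q (i + 2) * s (i + 1) - s (i + 2)" "0 \<le> s (i + 2)" "s (i + 2) < s (i + 1)"
    using s_rec[OF i] by (simp_all add: add.assoc)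
  ultimately have "s (i + 1) < q (i + 2) * s (i + 1)" "0 < s (i + 1)"
    by linarith+
  then have "2 \<le> q (i + 2)"
    by (smt (verit) mult_le_cancel_right2)
  then have "2 * P (i + 1) \<le> q (i + 2) * P (i + 1)"
    using IH by (intro mult_right_mono) auto
  moreover have "P (i + 2) = q (i + 2) * P (i + 1) - P i"
    using P_rec[OF i] by (simp add: add.assoc)
  ultimately have "P (i + 1) < P (i + 2)"
    using IH by linarith
  then show ?case
    using IH by (simp add: add.assoc)
qed

lemma lattice_coordinates:
  fixes a z sv sv' Pv Pv' p q :: int
  assumes "a \<noteq> 0" and det: "sv * Pv' - sv' * Pv = a"
    and "[sv = Pv * z] (mod a)" "[sv' = Pv' * z] (mod a)" "[p + q * z = 0] (mod a)"
  obtains \<alpha> \<beta> where "p = \<alpha> * sv + \<beta> * sv'" "q = - (\<alpha> * Pv + \<beta> * Pv')"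
proof -
  have dvd: "a dvd sv - Pv * z" "a dvd sv' - Pv' * z" "a dvd p + q * z"
    using assms(3-5) by (simp_all add: cong_iff_dvd_diff)
  have "p * Pv' + q * sv' = Pv' * (p + q * z) + q * (sv' - Pv' * z)"
    by (simp add: algebra_simps)
  then have "a dvd p * Pv' + q * sv'"
    using dvd by simp
  then obtain \<alpha> where \<alpha>: "p * Pv' + q * sv' = a * \<alpha>" ..
  have "- (p * Pv + q * sv) = - (Pv * (p + q * z) + q * (sv - Pv * z))"
    by (simp add: algebra_simps)
  then have "a dvd - (p * Pv + q * sv)"
    using dvd by simp
  then obtain \<beta> where \<beta>: "- (p * Pv + q * sv) = a * \<beta>" ..
  have "a * (\<alpha> * sv + \<beta> * sv') = sv * (a * \<alpha>) + sv' * (a * \<beta>)"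
    by (simp add: algebra_simps)
  also have "\<dots> = p * (sv * Pv' - sv' * Pv)"
    unfolding \<alpha>[symmetric] \<beta>[symmetric] by (simp add: algebra_simps)
  finally have p: "a * (\<alpha> * sv + \<beta> * sv') = a * p"
    using det by simp
  have "a * (\<alpha> * Pv + \<beta> * Pv') = Pv * (a * \<alpha>) + Pv' * (a * \<beta>)"
    by (simp add: algebra_simps)
  also have "\<dots> = - q * (sv * Pv' - sv' * Pv)"
    unfolding \<alpha>[symmetric] \<beta>[symmetric] by (simp add: algebra_simps)
  finally have q: "a * (\<alpha> * Pv + \<beta> * Pv') = a * (- q)"
    using det by simp
  have "\<alpha> * Pv + \<beta> * Pv' = - q"
    using q assms(1) by (meson mult_cancel_left)
  then show thesis
    using that[of \<alpha> \<beta>] p assms(1) by auto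
qed

lemma Lset_lattice_shift_signs:
  fixes sv sv' Pv Pv' x y \<alpha> \<beta> :: int
  assumes s: "0 \<le> sv'" "sv' < sv" and P: "0 \<le> Pv" "Pv < Pv'"
    and L: "(x, y) \<in> Lset sv sv' Pv Pv'"
    and X: "0 \<le> x + \<alpha> * sv + \<beta> * sv'" and w: "0 \<le> y - \<alpha> * Pv - \<beta> * Pv'"
  shows "0 \<le> \<alpha> \<and> \<beta> \<le> 0"
proof -
  have xy: "0 \<le> x" "x \<le> sv - 1" "y \<le> Pv' - 1" and B: "Pv' - Pv \<le> y \<Longrightarrow> x \<le> sv - sv' - 1"
    using L s P unfolding Lset_def by auto
  have "0 \<le> \<alpha>"
  proof (rule ccontr)
    assume "\<not> 0 \<le> \<alpha>"
    then have \<alpha>: "\<alpha> \<le> -1" by simp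
    have shrink_s: "\<alpha> * (sv - sv') \<le> - (sv - sv')"
      using mult_right_mono[OF \<alpha>, of "sv - sv'"] s by simp
    have shrink_P: "\<alpha> * (Pv' - Pv) \<le> - (Pv' - Pv)"
      using mult_right_mono[OF \<alpha>, of "Pv' - Pv"] P by simp
    consider "\<beta> \<le> - \<alpha> - 1" | "\<beta> = - \<alpha>" | "- \<alpha> + 1 \<le> \<beta>"
      by linarith
    then show False
    proof cases
      case 1
      then have "\<beta> * sv' \<le> (- \<alpha> - 1) * sv'"
        using s by (intro mult_right_mono) auto
      then show False
        using X xy shrink_s by (simp add: algebra_simps)
    next
      case 2
      then have "Pv' - Pv \<le> y"
        using w shrink_P by (simp add: algebra_simps)
      then show False
        using X B shrink_s 2 by (simp add: algebra_simps)
    next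
      case 3
      then have "(- \<alpha> + 1) * Pv' \<le> \<beta> * Pv'"
        using P by (intro mult_right_mono) auto
      then show False
        using w xy shrink_P P by (simp add: algebra_simps)
    qed
  qed
  moreover have "\<beta> \<le> 0"
  proof (rule ccontr)
    assume "\<not> \<beta> \<le> 0"
    then have "Pv' \<le> \<beta> * Pv'"
      using P by simp
    moreover have "0 \<le> \<alpha> * Pv"
      using \<open>0 \<le> \<alpha>\<close> P by simp
    ultimately show False
      using w xy by linarith
  qed
  ultimately show ?thesis ..
qed

lemma phi_minimal_in_residue_class:
  fixes a d c z sv sv' Pv Pv' x y t :: int and k :: nat
  assumes a: "0 < a" and k: "0 < k" and cop: "coprime a d" and c: "[d * z = c] (mod a)"
    and s: "0 \<le> sv'" "sv' < sv" and P: "0 \<le> Pv" "Pv < Pv'"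
    and det: "sv * Pv' - sv' * Pv = a"
    and cong: "[sv = Pv * z] (mod a)" "[sv' = Pv' * z] (mod a)"
    and R: "0 < (a + int k * d) * sv - int k * c * Pv" "(a + int k * d) * sv' - int k * c * Pv' \<le> 0"
    and L: "(x, y) \<in> Lset sv sv' Pv Pv'"
    and t: "t \<in> AA_semigroup a d k c" "[t = phi a d k c x y] (mod a)"
  shows "phi a d k c x y \<le> t"
proof -
  obtain U X w where UXw: "0 \<le> X" "X \<le> int k * U" "0 \<le> w" "t = U * a + X * d + w * c"
    using AA_semigroup_memE[OF t(1)] .
  define C where "C = \<lceil>real_of_int x / real k\<rceil>"
  define p q where "p = X - x" and "q = w - y"
  have diff: "t - phi a d k c x y = (U - C) * a + p * d + q * c"
    unfolding phi_def C_def[symmetric] p_def q_def UXw(4) by (simp add: algebra_simps)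
  have "[(U - C) * a + p * d + q * c = 0 + p * d + q * (d * z)] (mod a)"
    using c by (intro cong_add cong_mult cong_refl) (simp_all add: cong_mult_self_right cong_sym)
  moreover have "[(U - C) * a + p * d + q * c = 0] (mod a)"
    using t(2) diff by (simp add: cong_iff_dvd_diff)
  ultimately have "[0 + p * d + q * (d * z) = 0] (mod a)"
    by (metis cong_sym cong_trans)
  then have "[d * (p + q * z) = 0] (mod a)"
    by (simp add: algebra_simps)
  then have "[p + q * z = 0] (mod a)"
    using cop by (simp add: cong_iff_dvd_diff coprime_dvd_mult_right_iff)
  then obtain \<alpha> \<beta> where pq: "p = \<alpha> * sv + \<beta> * sv'" "q = - (\<alpha> * Pv + \<beta> * Pv')"
    using lattice_coordinates[OF _ det cong] a by blast
  have "0 \<le> x + \<alpha> * sv + \<beta> * sv'" "0 \<le> y - \<alpha> * Pv - \<beta> * Pv'"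
    using UXw(1,3) pq unfolding p_def q_def by linarith+
  then have "0 \<le> \<alpha> \<and> \<beta> \<le> 0"
    by (rule Lset_lattice_shift_signs[OF s P L])
  then have "0 \<le> \<alpha> * ((a + int k * d) * sv - int k * c * Pv) + \<beta> * ((a + int k * d) * sv' - int k * c * Pv')"
    using R by (intro add_nonneg_nonneg mult_nonneg_nonneg mult_nonpos_nonpos) auto
  also have "\<dots> = (a + int k * d) * p + int k * c * q"
    unfolding pq by (simp add: algebra_simps)
  finally have pos: "0 \<le> (a + int k * d) * p + int k * c * q" .
  have "int k * (C - 1) < x"
    using ceiling_divide_bounds[OF k] unfolding C_def by blast
  then have "(p - int k + 1) * a \<le> (int k * U - int k * C) * a"
    using UXw(2) a unfolding p_def by (intro mult_right_mono) (auto simp: algebra_simps)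
  then have "int k * (- a) < int k * (t - phi a d k c x y)"
    using pos a unfolding diff by (simp add: algebra_simps)
  then have "- a < t - phi a d k c x y"
    using k mult_less_cancel_left_pos[of "int k" "- a"] by simp
  moreover obtain e where e: "t - phi a d k c x y = a * e"
    using t(2) by (metis cong_iff_dvd_diff dvdE)
  ultimately have "a * (- 1) < a * e"
    by simp
  then have "0 \<le> e"
    using a by (simp only: mult_less_cancel_left_pos)
  then have "0 \<le> a * e"
    using a by simp
  then show ?thesis
    using e by linarith
qed

lemma phi_one_zero:
  assumes "0 < k"
  shows "phi a d k c 1 0 = a + d"
proof -
  have "\<lceil>real_of_int 1 / real k\<rceil> = 1"
    unfolding ceiling_divide_eq_iff[OF assms] using assms by simp
  then show ?thesis
    unfolding phi_def by simp
qed

lemma phi_diff_one: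
  assumes "0 < k" and "\<not> int k dvd x - 1"
  shows "phi a d k c (x - 1) y = phi a d k c x y - d"
  unfolding phi_def ceiling_divide_diff_one[OF assms] by (simp add: algebra_simps)

lemma phi_split:
  assumes "0 < k" and "x0 = 0 \<or> [x0 = 1] (mod int k)" and "0 \<le> x" "x \<le> x0"
  shows "phi a d k c x0 y0 = phi a d k c (x0 - x) (y0 - y) + phi a d k c x y"
  using assms ceiling_divide_split[OF assms(1) _ assms(3,4)]
  unfolding phi_def by (auto simp: algebra_simps)

lemma frobenius_point_residue:
  fixes a d c x0 y0 sv sv' Pv Pv' :: int and k :: nat
  assumes pos: "0 < a" "0 < d" "0 < c" "0 < k"
    and pseudo: "pseudo_symmetric (AA_semigroup a d k c)"
    and s': "0 \<le> sv'" and P: "Pv \<le> Pv'"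
    and minimal: "\<And>x y t. (x, y) \<in> Lset sv sv' Pv Pv' \<Longrightarrow> t \<in> AA_semigroup a d k c \<Longrightarrow>
                    [t = phi a d k c x y] (mod a) \<Longrightarrow> phi a d k c x y \<le> t"
    and L: "(x0, y0) \<in> Lset sv sv' Pv Pv'"
    and max: "phi a d k c x0 y0 = frobenius (AA_semigroup a d k c) + a"
    and not20: "(x0, y0) \<noteq> (2, 0)"
  shows "x0 = 0 \<or> [x0 = 1] (mod int k)"
proof (rule ccontr)
  define S G where "S = AA_semigroup a d k c" and "G = frobenius S"
  assume "\<not> (x0 = 0 \<or> [x0 = 1] (mod int k))"
  then have x0: "x0 \<noteq> 0" "\<not> int k dvd x0 - 1"
    by (auto simp: cong_iff_dvd_diff)
  moreover have y0: "0 \<le> x0" "0 \<le> y0"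
    using L P unfolding Lset_def by auto
  ultimately have "2 \<le> x0"
    by (cases "x0 = 1") auto
  then have L': "(1, 0) \<in> Lset sv sv' Pv Pv'" "(x0 - 1, y0) \<in> Lset sv sv' Pv Pv'"
    using Lset_downward_closed[OF s' L] y0 by auto
  have "d \<notin> S"
  proof
    assume "d \<in> S"
    moreover have "[d = phi a d k c 1 0] (mod a)"
      using phi_one_zero[OF pos(4)] by (simp add: cong_iff_dvd_diff)
    ultimately have "phi a d k c 1 0 \<le> d"
      using minimal[OF L'(1)] unfolding S_def by blast
    then show False
      using phi_one_zero[OF pos(4)] pos by simp
  qed
  moreover have "G - d \<notin> S"
  proof
    assume "G - d \<in> S"
    moreover have "phi a d k c (x0 - 1) y0 = G + a - d"
      using phi_diff_one[OF pos(4) x0(2)] max unfolding G_def S_def by simp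
    ultimately have "G + a - d \<le> G - d"
      using minimal[OF L'(2)] unfolding S_def by (simp add: cong_iff_dvd_diff)
    then show False
      using pos by simp
  qed
  ultimately have "G = 2 * d"
    using pseudo_symmetric_gap_pair pseudo unfolding G_def S_def by blast
  then have phi0: "\<lceil>real_of_int x0 / real k\<rceil> * a + x0 * d + y0 * c = a + 2 * d"
    using max unfolding phi_def G_def S_def by simp
  have "0 < \<lceil>real_of_int x0 / real k\<rceil>"
    using ceiling_divide_bounds(2)[OF pos(4), of x0] \<open>2 \<le> x0\<close> pos(4) zero_less_mult_pos by fastforce
  then have "a \<le> \<lceil>real_of_int x0 / real k\<rceil> * a" "2 * d \<le> x0 * d" "0 \<le> y0 * c"
    using pos y0 \<open>2 \<le> x0\<close> by (simp_all add: mult_right_mono)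
  then have "x0 * d = 2 * d" "y0 * c = 0"
    using phi0 by linarith+
  then show False
    using pos(2,3) not20 by simp
qed

lemma dvd_R_numerator:
  fixes a d c z sv Pv :: int and k :: nat
  assumes "[d * z = c] (mod a)" and "[sv = Pv * z] (mod a)"
  shows "a dvd (a + int k * d) * sv - int k * c * Pv"
proof -
  have "[(a + int k * d) * sv - int k * c * Pv = (0 + int k * d) * (Pv * z) - int k * (d * z) * Pv] (mod a)"
    using assms by (intro cong_diff cong_mult cong_add cong_refl) (simp_all add: cong_sym cong_0_iff)
  then show ?thesis
    by (simp add: cong_iff_dvd_diff algebra_simps)
qed

theorem lemma6:
  fixes a d c :: int and k :: nat
    and s q P R :: "int \<Rightarrow> int" and m v x0 y0 :: int
  assumes pos: "a > 0" "d > 0" "c > 0" "k > 0"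
    and gcd_gens: "Gcd ({a + int i * d | i. i \<le> k} \<union> {c}) = 1"
    and gcd_ad: "gcd a d = 1"
    and k2: "k \<ge> 2"
    and s_m1: "s (-1) = a"
    and s_0: "0 \<le> s 0" "s 0 < a" "[d * s 0 = c] (mod a)"
    and m_ge: "m \<ge> -1"
    and s_rec: "\<And>i. 0 \<le> i \<Longrightarrow> i \<le> m \<Longrightarrow>
                  s (i - 1) = q (i + 1) * s i - s (i + 1) \<and> 0 \<le> s (i + 1) \<and> s (i + 1) < s i"
    and s_pos: "\<And>i. -1 \<le> i \<Longrightarrow> i \<le> m \<Longrightarrow> s i > 0"
    and s_end: "s (m + 1) = 0"
    and P_m1: "P (-1) = 0" and P_0: "P 0 = 1"
    and P_rec: "\<And>i. 0 \<le> i \<Longrightarrow> i \<le> m \<Longrightarrow> P (i + 1) = q (i + 1) * P i - P (i - 1)"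
    and R_def: "\<And>i. -1 \<le> i \<Longrightarrow> i \<le> m + 1 \<Longrightarrow>
                  R i = ((a + int k * d) * s i - int k * c * P i) div a"
    and v_def: "-1 \<le> v" "v \<le> m" "R (v + 1) \<le> 0" "0 < R v"
    and pseudo: "pseudo_symmetric (AA_semigroup a d k c)"
    and inL: "(x0, y0) \<in> Lset (s v) (s (v + 1)) (P v) (P (v + 1))"
    and maxpt: "phi a d k c x0 y0 = frobenius (AA_semigroup a d k c) + a"
    and not20: "(x0, y0) \<noteq> (2, 0)"
  shows "(x0 = 0 \<or> [x0 = 1] (mod int k)) \<and>
         (\<forall>x y. 0 \<le> x \<and> x \<le> x0 \<and> 0 \<le> y \<and> y \<le> y0 \<longrightarrow>
            phi a d k c x0 y0 = phi a d k c (x0 - x) (y0 - y) + phi a d k c x y)"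
proof -
  note v = v_def(1,2)
  have s: "0 \<le> s (v + 1)" "s (v + 1) < s v"
    using s_rec[of v] s_0 s_m1 v by (cases "v = -1"; auto)+
  have P: "0 \<le> P v" "P v < P (v + 1)"
    using continuant_increasing[OF s_m1 s_0(2) s_rec P_m1 P_0 P_rec v] by auto
  have s_eq: "\<And>i. 0 \<le> i \<Longrightarrow> i \<le> m \<Longrightarrow> s (i - 1) = q (i + 1) * s i - s (i + 1)"
    using s_rec by blast
  have cong: "[s v = P v * s 0] (mod a)" "[s (v + 1) = P (v + 1) * s 0] (mod a)"
    and det: "s v * P (v + 1) - s (v + 1) * P v = a"
    using continuant_cong_det[OF s_m1 s_eq P_m1 P_0 P_rec v] by auto
  have R_eq: "a * R i = (a + int k * d) * s i - int k * c * P i"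
    if "-1 \<le> i" "i \<le> m + 1" "[s i = P i * s 0] (mod a)" for i
    using R_def[OF that(1,2)] dvd_R_numerator[OF s_0(3) that(3)] by simp
  have "0 < a * R v" "a * R (v + 1) \<le> 0"
    using pos(1) v_def(3,4) by (simp_all add: mult_nonneg_nonpos)
  then have R: "0 < (a + int k * d) * s v - int k * c * P v"
      "(a + int k * d) * s (v + 1) - int k * c * P (v + 1) \<le> 0"
    using R_eq[of v] R_eq[of "v + 1"] cong v by simp_all
  have minimal: "phi a d k c x y \<le> t"
    if "(x, y) \<in> Lset (s v) (s (v + 1)) (P v) (P (v + 1))" "t \<in> AA_semigroup a d k c"
      "[t = phi a d k c x y] (mod a)" for x y t
    using phi_minimal_in_residue_class[OF pos(1,4) gcd_ad[folded coprime_iff_gcd_eq_1] s_0(3)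
        s P det cong R that] .
  have "x0 = 0 \<or> [x0 = 1] (mod int k)"
    using frobenius_point_residue[OF pos pseudo s(1) _ minimal inL maxpt not20] P by simp
  then show ?thesis
    using phi_split[OF pos(4)] by blast
qed

end
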